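(* Let $\mathbb{M}^3$ be Minkowski 3-space with inner product $\langle x,y\rangle_{\mathbb{L}}=-x_1y_1+x_2y_2+x_3y_3$. Let $\sigma=\sigma(u,v)$ be a smooth surface in $\mathbb{M}^3$ and let $\{t,n,b\}$ be smooth pairwise orthogonal vector fields along $\sigma$ with $\langle t,t\rangle_{\mathbb{L}}=-1$, $\langle n,n\rangle_{\mathbb{L}}=1$, $\langle b,b\rangle_{\mathbb{L}}=1$, such that $\sigma_u=t$, $\sigma_v=\lambda b$ for a nowhere-vanishing function $\lambda$, and $$t_u=\kappa n,\qquad n_u=\kappa t-\tau b,\qquad b_u=\tau n$$ for functions $\kappa,\tau$ (so each $u$-curve is a unit-speed timelike geodesic of $\sigma$ with curvature $\kappa$ and torsion $\tau$). Assume there are constants $A,B$ with $B^2>A^2$ and $A\kappa+B\tau=1$, and that $\tau$ vanishes nowhere. Define $$\sigma^*(u,v)=\sigma(u,v)-A\,n(u,v),\qquad t^*=\frac{Bt+Ab}{\sqrt{B^2-A^2}},\qquad b^*=\frac{-At+Bb}{\sqrt{B^2-A^2}},$$ and along each $u$-curve let $u^*$ be a parameter with $du^*/du=\sqrt{B^2-A^2}\,\tau$. Then: (1) $\sigma^*_u=\tau(Bt+Ab)$, so $t^*=\partial\sigma^*/\partial u^*$ is a unit timelike vector, and $n$ is orthogonal to both $\sigma^*_u$ and $\sigma^*_v$; (2) $\|\sigma-\sigma^*\|=\sqrt{|\langle \sigma-\sigma^*,\sigma-\sigma^*\rangle_{\mathbb{L}}|}$ is constant, $\langle\sigma^*-\sigma,b\rangle_{\mathbb{L}}=0$,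 $\langle\sigma^*-\sigma,b^*\rangle_{\mathbb{L}}=0$, and $\langle b,b^*\rangle_{\mathbb{L}}$ is constant; (3) $\partial t^*/\partial u^*=\kappa^* n$ and $\partial b^*/\partial u^*=\tau^* n$, where $$\kappa^*=\frac{B\kappa+A\tau}{(B^2-A^2)\tau},\qquad \tau^*=\frac{B\tau-A\kappa}{(B^2-A^2)\tau}.$$
   Context: A vector $x\in\mathbb{M}^3$ is spacelike if $\langle x,x\rangle_{\mathbb{L}}>0$ or $x=0$, timelike if $\langle x,x\rangle_{\mathbb{L}}<0$. A surface spanned by a one-parameter family of geodesic Bertrand curves with constants $A,B$ ($A\kappa+B\tau=1$) is called a Razzaboni surface; the map $\sigma\mapsto\sigma^*$ satisfying properties (2) is called a Razzaboni transformation and $\sigma^*$ the dual Razzaboni surface. *)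

theory Defs
  imports "HOL-Analysis.Analysis"
begin

definition minner :: "real^3 \<Rightarrow> real^3 \<Rightarrow> real" where
  "minner x y = - (x$1 * y$1) + x$2 * y$2 + x$3 * y$3"

definition mnorm :: "real^3 \<Rightarrow> real" where
  "mnorm x = sqrt \<bar>minner x x\<bar>"

definition sigma_star :: "real \<Rightarrow> (real\<times>real \<Rightarrow> real^3) \<Rightarrow> (real\<times>real \<Rightarrow> real^3) \<Rightarrow> real\<times>real \<Rightarrow> real^3" where
  "sigma_star A \<sigma> n p = \<sigma> p - A *\<^sub>R n p"

definition t_star :: "real \<Rightarrow> real \<Rightarrow> (real\<times>real \<Rightarrow> real^3) \<Rightarrow> (real\<times>real \<Rightarrow> real^3) \<Rightarrow> real\<times>real \<Rightarrow> real^3" where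
  "t_star A B t b p = (1 / sqrt (B\<^sup>2 - A\<^sup>2)) *\<^sub>R (B *\<^sub>R t p + A *\<^sub>R b p)"

definition b_star :: "real \<Rightarrow> real \<Rightarrow> (real\<times>real \<Rightarrow> real^3) \<Rightarrow> (real\<times>real \<Rightarrow> real^3) \<Rightarrow> real\<times>real \<Rightarrow> real^3" where
  "b_star A B t b p = (1 / sqrt (B\<^sup>2 - A\<^sup>2)) *\<^sub>R ((- A) *\<^sub>R t p + B *\<^sub>R b p)"

definition kappa_star :: "real \<Rightarrow> real \<Rightarrow> real \<Rightarrow> real \<Rightarrow> real" where
  "kappa_star A B k tau = (B * k + A * tau) / ((B\<^sup>2 - A\<^sup>2) * tau)"

definition tau_star :: "real \<Rightarrow> real \<Rightarrow> real \<Rightarrow> real \<Rightarrow> real" where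
  "tau_star A B k tau = (B * tau - A * k) / ((B\<^sup>2 - A\<^sup>2) * tau)"

end

theory Submission imports Defs begin

text \<open>
  Since \<open>A\<kappa> + B\<tau> = 1\<close>, the Frenet equations give
  \<open>\<sigma>\<^sup>*\<^sub>u = t - A(\<kappa>t - \<tau>b) = \<tau>(Bt + Ab)\<close>, a timelike vector of Lorentz square
  \<open>\<tau>\<^sup>2(A\<^sup>2 - B\<^sup>2)\<close>; its normalisation is \<open>t\<^sup>*\<close>. Everything else is linear algebra in the
  orthonormal frame \<open>{t, n, b}\<close>: \<open>\<sigma> - \<sigma>\<^sup>* = An\<close> is orthogonal to \<open>t, b\<close> and has
  constant square \<open>A\<^sup>2\<close>, and \<open>t\<^sup>*, b\<^sup>*\<close> are constant combinations of \<open>t, b\<close>, so their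
  \<open>u\<close>-derivatives are multiples of \<open>n\<close>. The only analytic point is \<open>\<langle>n, n\<^sub>v\<rangle> = 0\<close>,
  obtained by differentiating \<open>\<langle>n, n\<rangle> = 1\<close> in \<open>v\<close>.
\<close>

lemma minner_add_left: "minner (a + a') c = minner a c + minner a' c"
  and minner_add_right: "minner a (c + c') = minner a c + minner a c'"
  and minner_diff_left: "minner (a - a') c = minner a c - minner a' c"
  and minner_diff_right: "minner a (c - c') = minner a c - minner a c'"
  and minner_minus_left: "minner (- a) c = - minner a c"
  and minner_minus_right: "minner a (- c) = - minner a c"
  and minner_scaleR_left: "minner (r *\<^sub>R a) c = r * minner a c"
  and minner_scaleR_right: "minner a (r *\<^sub>R c) = r * minner a c"
  by (simp_all add: minner_def algebra_simps)

lemma minner_commute: "minner a c = minner c a"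
  by (simp add: minner_def algebra_simps)

lemmas minner_simps = minner_add_left minner_add_right minner_diff_left minner_diff_right
  minner_minus_left minner_minus_right minner_scaleR_left minner_scaleR_right

lemma bounded_bilinear_minner: "bounded_bilinear minner"
proof
  show "\<exists>K. \<forall>a c. norm (minner a c) \<le> norm a * norm c * K"
  proof (intro exI allI)
    fix a c :: "real^3"
    have comp: "\<And>i. \<bar>a$i * c$i\<bar> \<le> norm a * norm c"
      by (simp add: abs_mult component_le_norm_cart mult_mono)
    have "norm (minner a c) \<le> \<bar>a$1*c$1\<bar> + \<bar>a$2*c$2\<bar> + \<bar>a$3*c$3\<bar>"
      unfolding minner_def by simp
    also have "\<dots> \<le> norm a * norm c * 3" using comp[of 1] comp[of 2] comp[of 3] by simp
    finally show "norm (minner a c) \<le> norm a * norm c * 3" .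
  qed
qed (simp_all add: minner_simps)

lemmas has_vector_derivative_scaleR_right =
  bounded_linear.has_vector_derivative[OF bounded_linear_scaleR_right]

lemma minner_self_timelike_spacelike_combination:
  assumes "minner t t = -1" "minner b b = 1" "minner t b = 0"
  shows "minner (x *\<^sub>R t + y *\<^sub>R b) (x *\<^sub>R t + y *\<^sub>R b) = y\<^sup>2 - x\<^sup>2"
  using assms by (simp add: minner_simps minner_commute[of b t] power2_eq_square)

lemma minner_derivative_orthogonal_if_constant_square:
  fixes f :: "real \<Rightarrow> real^3"
  assumes "open S" "v \<in> S" "\<And>s. s \<in> S \<Longrightarrow> minner (f s) (f s) = c"
    and f': "(f has_vector_derivative D) (at v)"
  shows "minner (f v) D = 0"
proof -
  have "((\<lambda>s. minner (f s) (f s)) has_vector_derivative minner (f v) D + minner D (f v)) (at v)"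
    using bounded_bilinear.has_vector_derivative[OF bounded_bilinear_minner f' f'] .
  moreover have "((\<lambda>s. minner (f s) (f s)) has_vector_derivative 0) (at v)"
    by (rule has_vector_derivative_transform_within_open[of "\<lambda>_. c" _ _ S])
      (use assms in auto)
  ultimately have "minner (f v) D + minner D (f v) = 0"
    by (rule vector_derivative_unique_at)
  then show ?thesis by (simp add: minner_commute[of D])
qed

lemma differentiable_at_second_partial:
  assumes "g differentiable (at (u, v))"
  shows "(\<lambda>s. g (u, s)) differentiable (at v)"
proof -
  have "(g \<circ> Pair u) differentiable (at v)"
    by (rule differentiable_chain_at) (use assms in \<open>auto intro!: derivative_intros\<close>)
  then show ?thesis by (simp add: comp_def)
qed

lemma has_vector_derivative_sigma_star_u:
  assumes "((\<lambda>s. \<sigma> (s, v)) has_vector_derivative t (u, v)) (at u)"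
    and "((\<lambda>s. n (s, v)) has_vector_derivative \<kappa> *\<^sub>R t (u, v) - \<tau> *\<^sub>R b (u, v)) (at u)"
    and "A * \<kappa> + B * \<tau> = 1"
  shows "((\<lambda>s. sigma_star A \<sigma> n (s, v)) has_vector_derivative
           \<tau> *\<^sub>R (B *\<^sub>R t (u, v) + A *\<^sub>R b (u, v))) (at u)"
proof -
  have "t (u, v) - A *\<^sub>R (\<kappa> *\<^sub>R t (u, v) - \<tau> *\<^sub>R b (u, v))
        = (1 - A * \<kappa>) *\<^sub>R t (u, v) + (A * \<tau>) *\<^sub>R b (u, v)"
    by (simp add: algebra_simps)
  also have "\<dots> = (B * \<tau>) *\<^sub>R t (u, v) + (A * \<tau>) *\<^sub>R b (u, v)"
    using assms(3) by (simp add: eq_diff_eq)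
  also have "\<dots> = \<tau> *\<^sub>R (B *\<^sub>R t (u, v) + A *\<^sub>R b (u, v))"
    by (simp add: algebra_simps)
  finally have "t (u, v) - A *\<^sub>R (\<kappa> *\<^sub>R t (u, v) - \<tau> *\<^sub>R b (u, v))
                = \<tau> *\<^sub>R (B *\<^sub>R t (u, v) + A *\<^sub>R b (u, v))" .
  moreover have "((\<lambda>s. sigma_star A \<sigma> n (s, v)) has_vector_derivative
          t (u, v) - A *\<^sub>R (\<kappa> *\<^sub>R t (u, v) - \<tau> *\<^sub>R b (u, v))) (at u)"
    unfolding sigma_star_def by (intro derivative_intros has_vector_derivative_scaleR_right assms(1,2))
  ultimately show ?thesis by simp
qed

lemma has_vector_derivative_sigma_star_v_orthogonal:
  assumes "open U" "(u, v) \<in> U"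
    and "n differentiable (at (u, v))"
    and "\<And>p. p \<in> U \<Longrightarrow> minner (n p) (n p) = 1"
    and "minner (n (u, v)) (b (u, v)) = 0"
    and "((\<lambda>s. \<sigma> (u, s)) has_vector_derivative lam *\<^sub>R b (u, v)) (at v)"
  shows "\<exists>d. ((\<lambda>s. sigma_star A \<sigma> n (u, s)) has_vector_derivative d) (at v)
             \<and> minner (n (u, v)) d = 0"
proof -
  obtain Dn where Dn: "((\<lambda>s. n (u, s)) has_vector_derivative Dn) (at v)"
    using differentiable_at_second_partial[OF assms(3)] vector_derivative_works by blast
  have "open (Pair u -` U)"
    by (rule open_vimage) (auto intro: continuous_intros assms(1))
  then have "minner (n (u, v)) Dn = 0"
    by (rule minner_derivative_orthogonal_if_constant_square[OF _ _ _ Dn])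
      (use assms(2,4) in auto)
  moreover have "((\<lambda>s. sigma_star A \<sigma> n (u, s)) has_vector_derivative
                   lam *\<^sub>R b (u, v) - A *\<^sub>R Dn) (at v)"
    unfolding sigma_star_def by (intro derivative_intros has_vector_derivative_scaleR_right assms(6) Dn)
  ultimately show ?thesis
    using assms(5) by (auto simp: minner_simps)
qed

lemma scaleR_t_star:
  assumes "B\<^sup>2 > A\<^sup>2"
  shows "(sqrt (B\<^sup>2 - A\<^sup>2) * c) *\<^sub>R t_star A B t b p = c *\<^sub>R (B *\<^sub>R t p + A *\<^sub>R b p)"
  using assms by (simp add: t_star_def)

lemma minner_t_star_self:
  assumes "B\<^sup>2 > A\<^sup>2" "minner (t p) (t p) = -1" "minner (b p) (b p) = 1" "minner (t p) (b p) = 0"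
  shows "minner (t_star A B t b p) (t_star A B t b p) = -1"
proof -
  define q where "q = sqrt (B\<^sup>2 - A\<^sup>2)"
  have q2: "q\<^sup>2 = B\<^sup>2 - A\<^sup>2" using assms(1) by (simp add: q_def)
  have "t_star A B t b p = (B / q) *\<^sub>R t p + (A / q) *\<^sub>R b p"
    by (simp add: t_star_def q_def scaleR_add_right)
  then have "minner (t_star A B t b p) (t_star A B t b p) = (A\<^sup>2 - B\<^sup>2) / q\<^sup>2"
    using minner_self_timelike_spacelike_combination[OF assms(2-4)]
    by (simp add: power_divide diff_divide_distrib)
  also have "\<dots> = -1"
    using q2 assms(1) by (simp add: divide_eq_minus_1_iff)
  finally show ?thesis .
qed

lemma mnorm_sigma_diff_sigma_star:
  assumes "minner (n p) (n p) = 1"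
  shows "mnorm (\<sigma> p - sigma_star A \<sigma> n p) = \<bar>A\<bar>"
  using assms by (simp add: mnorm_def sigma_star_def minner_simps real_sqrt_abs
      power2_eq_square[symmetric])

lemma minner_sigma_star_diff_b_star:
  assumes "minner (t p) (n p) = 0" "minner (n p) (b p) = 0"
  shows "minner (sigma_star A \<sigma> n p - \<sigma> p) (b_star A B t b p) = 0"
  using assms by (simp add: sigma_star_def b_star_def minner_simps minner_commute[of "n p" "t p"])

lemma minner_b_b_star:
  assumes "minner (b p) (b p) = 1" "minner (t p) (b p) = 0"
  shows "minner (b p) (b_star A B t b p) = B / sqrt (B\<^sup>2 - A\<^sup>2)"
  using assms by (simp add: b_star_def minner_simps minner_commute[of "b p" "t p"])

text \<open>The reparametrisation \<open>du\<^sup>*/du = \<surd>c \<tau>\<close> turns \<open>z/\<surd>c\<close> into \<open>\<surd>c \<tau> \<cdot> z/(c \<tau>)\<close>.\<close>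
lemma divide_sqrt_eq_reparametrised:
  fixes c \<tau> z :: real
  assumes "c > 0" "\<tau> \<noteq> 0"
  shows "z / sqrt c = (sqrt c * \<tau>) * (z / (c * \<tau>))"
proof -
  have "sqrt c * sqrt c = c" using assms(1) by simp
  then show ?thesis using assms by (simp add: field_simps)
qed

lemma has_vector_derivative_combination_parallel:
  fixes f g :: "real \<Rightarrow> real^3"
  assumes "(f has_vector_derivative \<kappa> *\<^sub>R N) (at u)"
    and "(g has_vector_derivative \<tau> *\<^sub>R N) (at u)"
  shows "((\<lambda>s. c *\<^sub>R (x *\<^sub>R f s + y *\<^sub>R g s)) has_vector_derivative
           (c * (x * \<kappa> + y * \<tau>)) *\<^sub>R N) (at u)"
proof -
  have "((\<lambda>s. c *\<^sub>R (x *\<^sub>R f s + y *\<^sub>R g s)) has_vector_derivative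
          c *\<^sub>R (x *\<^sub>R (\<kappa> *\<^sub>R N) + y *\<^sub>R (\<tau> *\<^sub>R N))) (at u)"
    by (intro derivative_intros has_vector_derivative_scaleR_right assms)
  then show ?thesis by (simp add: algebra_simps)
qed

lemma has_vector_derivative_t_star:
  assumes "B\<^sup>2 > A\<^sup>2" "\<tau> \<noteq> 0"
    and "((\<lambda>s. t (s, v)) has_vector_derivative \<kappa> *\<^sub>R n (u, v)) (at u)"
    and "((\<lambda>s. b (s, v)) has_vector_derivative \<tau> *\<^sub>R n (u, v)) (at u)"
  shows "((\<lambda>s. t_star A B t b (s, v)) has_vector_derivative
           (sqrt (B\<^sup>2 - A\<^sup>2) * \<tau>) *\<^sub>R (kappa_star A B \<kappa> \<tau> *\<^sub>R n (u, v))) (at u)"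
  using has_vector_derivative_combination_parallel[OF assms(3,4), of "1 / sqrt (B\<^sup>2 - A\<^sup>2)" B A]
    divide_sqrt_eq_reparametrised[of "B\<^sup>2 - A\<^sup>2" \<tau> "B * \<kappa> + A * \<tau>"] assms(1,2)
  by (simp add: t_star_def kappa_star_def)

lemma has_vector_derivative_b_star:
  assumes "B\<^sup>2 > A\<^sup>2" "\<tau> \<noteq> 0"
    and "((\<lambda>s. t (s, v)) has_vector_derivative \<kappa> *\<^sub>R n (u, v)) (at u)"
    and "((\<lambda>s. b (s, v)) has_vector_derivative \<tau> *\<^sub>R n (u, v)) (at u)"
  shows "((\<lambda>s. b_star A B t b (s, v)) has_vector_derivative
           (sqrt (B\<^sup>2 - A\<^sup>2) * \<tau>) *\<^sub>R (tau_star A B \<kappa> \<tau> *\<^sub>R n (u, v))) (at u)"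
  using has_vector_derivative_combination_parallel[OF assms(3,4), of "1 / sqrt (B\<^sup>2 - A\<^sup>2)" "- A" B]
    divide_sqrt_eq_reparametrised[of "B\<^sup>2 - A\<^sup>2" \<tau> "B * \<tau> - A * \<kappa>"] assms(1,2)
  by (simp add: b_star_def tau_star_def algebra_simps)

theorem mainTheorem2:
  fixes U :: "(real \<times> real) set"
    and \<sigma> t n b :: "real \<times> real \<Rightarrow> real^3"
    and lam \<kappa> \<tau> :: "real \<times> real \<Rightarrow> real"
    and A B :: real
  assumes U_open: "open U"
    and smooth: "\<And>p. p \<in> U \<Longrightarrow> \<sigma> differentiable (at p) \<and> t differentiable (at p)
                     \<and> n differentiable (at p) \<and> b differentiable (at p)"
    and frame: "\<And>p. p \<in> U \<Longrightarrow> minner (t p) (t p) = -1 \<and> minner (n p) (n p) = 1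
                     \<and> minner (b p) (b p) = 1 \<and> minner (t p) (n p) = 0
                     \<and> minner (t p) (b p) = 0 \<and> minner (n p) (b p) = 0"
    and sigma_u: "\<And>u v. (u, v) \<in> U \<Longrightarrow> ((\<lambda>s. \<sigma> (s, v)) has_vector_derivative t (u, v)) (at u)"
    and sigma_v: "\<And>u v. (u, v) \<in> U \<Longrightarrow> ((\<lambda>s. \<sigma> (u, s)) has_vector_derivative lam (u, v) *\<^sub>R b (u, v)) (at v)"
    and lam_nz: "\<And>p. p \<in> U \<Longrightarrow> lam p \<noteq> 0"
    and t_u: "\<And>u v. (u, v) \<in> U \<Longrightarrow> ((\<lambda>s. t (s, v)) has_vector_derivative \<kappa> (u, v) *\<^sub>R n (u, v)) (at u)"
    and n_u: "\<And>u v. (u, v) \<in> U \<Longrightarrow> ((\<lambda>s. n (s, v)) has_vector_derivative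
                 \<kappa> (u, v) *\<^sub>R t (u, v) - \<tau> (u, v) *\<^sub>R b (u, v)) (at u)"
    and b_u: "\<And>u v. (u, v) \<in> U \<Longrightarrow> ((\<lambda>s. b (s, v)) has_vector_derivative \<tau> (u, v) *\<^sub>R n (u, v)) (at u)"
    and AB: "B\<^sup>2 > A\<^sup>2"
    and bertrand: "\<And>p. p \<in> U \<Longrightarrow> A * \<kappa> p + B * \<tau> p = 1"
    and tau_nz: "\<And>p. p \<in> U \<Longrightarrow> \<tau> p \<noteq> 0"
  shows
    "(\<forall>u v. (u, v) \<in> U \<longrightarrow>
        ((\<lambda>s. sigma_star A \<sigma> n (s, v)) has_vector_derivative
            \<tau> (u, v) *\<^sub>R (B *\<^sub>R t (u, v) + A *\<^sub>R b (u, v))) (at u)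
      \<and> ((\<lambda>s. sigma_star A \<sigma> n (s, v)) has_vector_derivative
            (sqrt (B\<^sup>2 - A\<^sup>2) * \<tau> (u, v)) *\<^sub>R t_star A B t b (u, v)) (at u)
      \<and> minner (t_star A B t b (u, v)) (t_star A B t b (u, v)) = -1
      \<and> minner (n (u, v)) (\<tau> (u, v) *\<^sub>R (B *\<^sub>R t (u, v) + A *\<^sub>R b (u, v))) = 0
      \<and> (\<exists>d. ((\<lambda>s. sigma_star A \<sigma> n (u, s)) has_vector_derivative d) (at v)
             \<and> minner (n (u, v)) d = 0))
   \<and> (\<exists>c. \<forall>p\<in>U. mnorm (\<sigma> p - sigma_star A \<sigma> n p) = c)
   \<and> (\<forall>p\<in>U. minner (sigma_star A \<sigma> n p - \<sigma> p) (b p) = 0)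
   \<and> (\<forall>p\<in>U. minner (sigma_star A \<sigma> n p - \<sigma> p) (b_star A B t b p) = 0)
   \<and> (\<exists>c. \<forall>p\<in>U. minner (b p) (b_star A B t b p) = c)
   \<and> (\<forall>u v. (u, v) \<in> U \<longrightarrow>
        ((\<lambda>s. t_star A B t b (s, v)) has_vector_derivative
            (sqrt (B\<^sup>2 - A\<^sup>2) * \<tau> (u, v)) *\<^sub>R (kappa_star A B (\<kappa> (u, v)) (\<tau> (u, v)) *\<^sub>R n (u, v))) (at u)
      \<and> ((\<lambda>s. b_star A B t b (s, v)) has_vector_derivative
            (sqrt (B\<^sup>2 - A\<^sup>2) * \<tau> (u, v)) *\<^sub>R (tau_star A B (\<kappa> (u, v)) (\<tau> (u, v)) *\<^sub>R n (u, v))) (at u))"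
proof (intro conjI allI impI ballI)
  fix u v assume uv: "(u, v) \<in> U"
  note frame_uv = frame[OF uv]
  show "((\<lambda>s. sigma_star A \<sigma> n (s, v)) has_vector_derivative
            \<tau> (u, v) *\<^sub>R (B *\<^sub>R t (u, v) + A *\<^sub>R b (u, v))) (at u)"
    using sigma_u[OF uv] n_u[OF uv] bertrand[OF uv] by (rule has_vector_derivative_sigma_star_u)
  then show "((\<lambda>s. sigma_star A \<sigma> n (s, v)) has_vector_derivative
            (sqrt (B\<^sup>2 - A\<^sup>2) * \<tau> (u, v)) *\<^sub>R t_star A B t b (u, v)) (at u)"
    by (simp only: scaleR_t_star[OF AB])
  show "minner (t_star A B t b (u, v)) (t_star A B t b (u, v)) = -1"
    using minner_t_star_self[OF AB] frame_uv by blast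
  show "minner (n (u, v)) (\<tau> (u, v) *\<^sub>R (B *\<^sub>R t (u, v) + A *\<^sub>R b (u, v))) = 0"
    using frame_uv by (simp add: minner_simps minner_commute[of "n (u, v)" "t (u, v)"])
  show "\<exists>d. ((\<lambda>s. sigma_star A \<sigma> n (u, s)) has_vector_derivative d) (at v)
             \<and> minner (n (u, v)) d = 0"
    by (rule has_vector_derivative_sigma_star_v_orthogonal[where \<sigma> = \<sigma> and n = n and b = b,
          OF U_open uv _ _ _ sigma_v[OF uv]])
      (use smooth[OF uv] frame frame_uv in auto)
  show "((\<lambda>s. t_star A B t b (s, v)) has_vector_derivative
            (sqrt (B\<^sup>2 - A\<^sup>2) * \<tau> (u, v)) *\<^sub>R (kappa_star A B (\<kappa> (u, v)) (\<tau> (u, v)) *\<^sub>R n (u, v))) (at u)"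
    using AB tau_nz[OF uv] t_u[OF uv] b_u[OF uv] by (rule has_vector_derivative_t_star)
  show "((\<lambda>s. b_star A B t b (s, v)) has_vector_derivative
            (sqrt (B\<^sup>2 - A\<^sup>2) * \<tau> (u, v)) *\<^sub>R (tau_star A B (\<kappa> (u, v)) (\<tau> (u, v)) *\<^sub>R n (u, v))) (at u)"
    using AB tau_nz[OF uv] t_u[OF uv] b_u[OF uv] by (rule has_vector_derivative_b_star)
next
  show "\<exists>c. \<forall>p\<in>U. mnorm (\<sigma> p - sigma_star A \<sigma> n p) = c"
    using mnorm_sigma_diff_sigma_star frame by blast
  show "\<exists>c. \<forall>p\<in>U. minner (b p) (b_star A B t b p) = c"
    using minner_b_b_star frame by blast
next
  fix p assume p: "p \<in> U"
  show "minner (sigma_star A \<sigma> n p - \<sigma> p) (b p) = 0"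
    using frame[OF p] by (simp add: sigma_star_def minner_simps)
  show "minner (sigma_star A \<sigma> n p - \<sigma> p) (b_star A B t b p) = 0"
    using minner_sigma_star_diff_b_star frame[OF p] by blast
qed

end
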